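(* Consider the clipped GLM with sparsity prior described in the context. Let $a_n>0$ and let $\lambda_n$ satisfy Assumption $\mathcal{L}_0$, i.e. $\mathcal{M}(A,X)/d_n\le \lambda_n\le \mathcal{M}(A,X)\sqrt{\log d_n}$. Let $n,d_n\to\infty$ with $d_n>n$, let $\{b_n\}$ be a positive sequence with $b_n=o(n/\log d_n)$, and consider $n$ large enough that $b_n\log d_n<n$. Let the true parameter $\beta^*$ belong to $\mathcal{B}_{2,n}=\{\beta\in\mathbb{R}^{d_n}:0<|\mathrm{supp}(\beta)|\le b_n\}$. Then, with probability at least $1-(s_n^*\log d_n)^{-1}$ with respect to the data generating distribution (with parameter $\beta^*$), for all sufficiently large $n$ the marginal likelihood satisfies $$\int \exp\big(L_n(\eta,\eta^* )\big)\,\Pi_n(\beta)\,d\beta \;\gtrsim\; C_n\, d_n^{-(a_n+6)s_n^*}\exp(-\lambda_n\|\beta^*\|_1),$$ where $\gtrsim$ means $\ge$ up to a positive absolute constant.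
   Context: Exponential family: $f(y\mid\theta)=h(y)\exp[\theta T(y)-A(\theta)]$, $y\in\mathcal{Y}\subset\mathbb{R}$, with convex log-partition function $A$ such that $A''$ exists everywhere on the domain of $A$ and, for every $b\in(0,\infty]$, $\mathcal{I}_A(b):=\{t\in\mathbb{R}:0\le A''(t)\le b\}$ is an interval. Clipping function: there is a constant $\mathcal{M}_0(A)>0$ such that $\eta:\mathbb{R}\to\mathcal{I}_A(\mathcal{M}_0^2(A)/2)$ is Lipschitz and injective. Data: design matrix $X\in\mathbb{R}^{n\times d_n}$ with rows $x_i^{\mathrm T}$; for $\beta\in\mathbb{R}^{d_n}$ put $\eta_i=\eta(x_i^{\mathrm T}\beta)$, and for the true parameter $\beta^*$ put $\eta_i^*=\eta(x_i^{\mathrm T}\beta^* )$. Observations $y_1,\dots,y_n$ are independent with densities $h(y_i)\exp(T_i\eta_i^*-A(\eta_i^* ))$, $T_i=T(y_i)$. Define $\mathcal{D}_n(\eta^*\|\eta)=\sum_{i=1}^n[A(\eta_i)-A(\eta_i^* )-(\eta_i-\eta_i^* )A'(\eta_i^* )]$, $Z_n(\eta,\eta^* )=\sum_{i=1}^n (T_i-\mathbb{E}T_i)(\eta_i-\eta_i^* )$, and $L_n(\eta,\eta^* )=Z_n(\eta,\eta^* )-\mathcal{D}_n(\eta^*\|\eta)$. $S^*=\mathrm{supp}(\beta^* )$ (set of nonzero coordinates) and $s_n^*=|S^*|$. Prior: for $S\subset\{1,\dots,d_n\}$, $\beta_S$ denotes $\beta$ with coordinates in $S^c$ set to zero, and $$\Pi_n(S,\beta)=C_n\binom{d_n}{|S|}^{-1}\Big(\frac{\lambda_n}{2d_n^{a_n}}\Big)^{|S|}\exp(-\lambda_n\|\beta_S\|_1)\,\delta_0(\beta_{S^c}),$$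 with hyperparameters $a_n>0,\lambda_n>0$, $C_n$ the normalizing constant of the model-size weights $\omega_n(s)=C_nd_n^{-a_ns}$, $s=0,\dots,d_n$, and $\Pi_n(\beta)=\sum_S\Pi_n(S,\beta)$. Constants: $\|X\|_{(\infty,\infty)}:=\max\{X_{i,j}:1\le i\le n,1\le j\le d_n\}$, $\mathcal{M}_1(A):=(1\wedge\mathcal{M}_0^{-1}(A))^{-1}$, $\mathcal{M}(A,X):=\|X\|_{(\infty,\infty)}\mathcal{M}_1(A)$. *)

theory Defs
  imports "HOL-Probability.Probability" "HOL-Library.Landau_Symbols"
begin

definition fam_density :: "(real \<Rightarrow> real) \<Rightarrow> (real \<Rightarrow> real) \<Rightarrow> (real \<Rightarrow> real) \<Rightarrow> real \<Rightarrow> real \<Rightarrow> real" where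
  "fam_density h T A \<theta> y = h y * exp (\<theta> * T y - A \<theta>)"

definition nat_param :: "real measure \<Rightarrow> (real \<Rightarrow> real) \<Rightarrow> (real \<Rightarrow> real) \<Rightarrow> real set" where
  "nat_param \<mu> h T = {\<theta>. integrable \<mu> (\<lambda>y. h y * exp (\<theta> * T y))}"

definition expfam_ok ::
  "real measure \<Rightarrow> (real \<Rightarrow> real) \<Rightarrow> (real \<Rightarrow> real) \<Rightarrow> (real \<Rightarrow> real) \<Rightarrow> (real \<Rightarrow> real) \<Rightarrow> (real \<Rightarrow> real) \<Rightarrow> bool" where
  "expfam_ok \<mu> h T A A1 A2 \<longleftrightarrow>
     sets \<mu> = sets borel \<and> h \<in> borel_measurable \<mu> \<and> T \<in> borel_measurable \<mu> \<and> (\<forall>y. 0 \<le> h y) \<and>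
     (\<forall>\<theta>\<in>nat_param \<mu> h T. (\<integral>y. h y * exp (\<theta> * T y) \<partial>\<mu>) = exp (A \<theta>)) \<and>
     convex_on (nat_param \<mu> h T) A \<and>
     (\<forall>t\<in>nat_param \<mu> h T. (A has_real_derivative A1 t) (at t within nat_param \<mu> h T) \<and>
                             (A1 has_real_derivative A2 t) (at t within nat_param \<mu> h T)) \<and>
     (\<forall>b>0. is_interval {t\<in>nat_param \<mu> h T. 0 \<le> A2 t \<and> A2 t \<le> b}) \<and>
     is_interval {t\<in>nat_param \<mu> h T. 0 \<le> A2 t}"

definition I_A :: "real measure \<Rightarrow> (real \<Rightarrow> real) \<Rightarrow> (real \<Rightarrow> real) \<Rightarrow> (real \<Rightarrow> real) \<Rightarrow> real \<Rightarrow> real set" where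
  "I_A \<mu> h T A2 b = {t\<in>nat_param \<mu> h T. 0 \<le> A2 t \<and> A2 t \<le> b}"

definition clip_ok ::
  "real measure \<Rightarrow> (real \<Rightarrow> real) \<Rightarrow> (real \<Rightarrow> real) \<Rightarrow> (real \<Rightarrow> real) \<Rightarrow> real \<Rightarrow> (real \<Rightarrow> real) \<Rightarrow> bool" where
  "clip_ok \<mu> h T A2 M0 \<eta> \<longleftrightarrow> 0 < M0 \<and> (\<forall>x. \<eta> x \<in> I_A \<mu> h T A2 (M0\<^sup>2 / 2)) \<and>
     (\<exists>L. lipschitz_on L UNIV \<eta>) \<and> inj \<eta>"

definition lin_pred :: "(nat \<Rightarrow> nat \<Rightarrow> real) \<Rightarrow> nat \<Rightarrow> (nat \<Rightarrow> real) \<Rightarrow> nat \<Rightarrow> real" where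
  "lin_pred X d \<beta> i = (\<Sum>j<d. X i j * \<beta> j)"

definition obs_dist :: "real measure \<Rightarrow> (real \<Rightarrow> real) \<Rightarrow> (real \<Rightarrow> real) \<Rightarrow> (real \<Rightarrow> real) \<Rightarrow> real \<Rightarrow> real measure" where
  "obs_dist \<mu> h T A \<theta> = density \<mu> (\<lambda>y. ennreal (fam_density h T A \<theta> y))"

text \<open>Joint law of the independent observations y_1..y_n (indexed 0..n-1) under beta*.\<close>
definition data_dist ::
  "real measure \<Rightarrow> (real \<Rightarrow> real) \<Rightarrow> (real \<Rightarrow> real) \<Rightarrow> (real \<Rightarrow> real) \<Rightarrow> (real \<Rightarrow> real)
   \<Rightarrow> (nat \<Rightarrow> nat \<Rightarrow> real) \<Rightarrow> nat \<Rightarrow> nat \<Rightarrow> (nat \<Rightarrow> real) \<Rightarrow> (nat \<Rightarrow> real) measure" where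
  "data_dist \<mu> h T A \<eta> X n d \<beta>s =
     PiM {..<n} (\<lambda>i. obs_dist \<mu> h T A (\<eta> (lin_pred X d \<beta>s i)))"

definition Ln ::
  "real measure \<Rightarrow> (real \<Rightarrow> real) \<Rightarrow> (real \<Rightarrow> real) \<Rightarrow> (real \<Rightarrow> real) \<Rightarrow> (real \<Rightarrow> real) \<Rightarrow> (real \<Rightarrow> real)
   \<Rightarrow> (nat \<Rightarrow> nat \<Rightarrow> real) \<Rightarrow> nat \<Rightarrow> nat \<Rightarrow> (nat \<Rightarrow> real) \<Rightarrow> (nat \<Rightarrow> real) \<Rightarrow> (nat \<Rightarrow> real) \<Rightarrow> real" where
  "Ln \<mu> h T A A1 \<eta> X n d \<beta>s \<beta> y =
     (let e = (\<lambda>i. \<eta> (lin_pred X d \<beta> i)); es = (\<lambda>i. \<eta> (lin_pred X d \<beta>s i));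
          ET = (\<lambda>i. integral\<^sup>L (obs_dist \<mu> h T A (es i)) T);
          Z = (\<Sum>i<n. (T (y i) - ET i) * (e i - es i));
          D = (\<Sum>i<n. A (e i) - A (es i) - (e i - es i) * A1 (es i))
      in Z - D)"

text \<open>Prior. Normalising constant C_n of the model-size weights omega_n(s) = C_n d^(-a s).\<close>
definition C_norm :: "nat \<Rightarrow> real \<Rightarrow> real" where
  "C_norm d a = 1 / (\<Sum>s\<le>d. real d powr (- a * real s))"

definition laplace_density :: "real \<Rightarrow> real \<Rightarrow> real" where
  "laplace_density lam x = lam / 2 * exp (- lam * \<bar>x\<bar>)"

definition coord_prior :: "real \<Rightarrow> nat set \<Rightarrow> nat \<Rightarrow> real measure" where
  "coord_prior lam S j = (if j \<in> S then density lborel (\<lambda>x. ennreal (laplace_density lam x))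
                          else return lborel 0)"

text \<open>Pi_n(S, beta) = C_n binom(d,|S|)^(-1) d^(-a|S|) * (lam/2)^|S| exp(-lam ||beta_S||_1) delta_0(beta_{S^c});
  the model weight is the part not absorbed in the Laplace densities.\<close>
definition model_weight :: "nat \<Rightarrow> real \<Rightarrow> nat set \<Rightarrow> real" where
  "model_weight d a S = C_norm d a / real (d choose card S) * real d powr (- a * real (card S))"

definition prior_integral :: "nat \<Rightarrow> real \<Rightarrow> real \<Rightarrow> ((nat \<Rightarrow> real) \<Rightarrow> ennreal) \<Rightarrow> ennreal" where
  "prior_integral d a lam g =
     (\<Sum>S\<in>Pow {..<d}. ennreal (model_weight d a S) *
        (\<integral>\<^sup>+ \<beta>. g \<beta> \<partial>(PiM {..<d} (coord_prior lam S))))"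

definition Xnorm :: "(nat \<Rightarrow> nat \<Rightarrow> real) \<Rightarrow> nat \<Rightarrow> nat \<Rightarrow> real" where
  "Xnorm X n d = Max {\<bar>X i j\<bar> | i j. i < n \<and> j < d}"

definition M1 :: "real \<Rightarrow> real" where
  "M1 M0 = inverse (min 1 (inverse M0))"

definition M_AX :: "real \<Rightarrow> (nat \<Rightarrow> nat \<Rightarrow> real) \<Rightarrow> nat \<Rightarrow> nat \<Rightarrow> real" where
  "M_AX M0 X n d = Xnorm X n d * M1 M0"

end

theory Submission
  imports Defs
begin

(* Restrict the prior to the true model S* = supp beta* and to the box of radius
   r = 1 / (K n^2 Lip(eta) ||X|| |S*|) around beta*.  On that box the clipped natural parameters
   move by at most 1 / (K n^2), so the Bregman term D_n is at most 1 by the curvature bound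
   A'' <= M0^2/2 on the range of eta, and the noise term Z_n is at least -1 as soon as
   sum_i |T_i - E T_i| <= K n^2.  By Markov's inequality this fails with probability at most
   1/n <= 1/(|S*| log d_n); the first-moment bound K comes from the moment generating function of T,
   which the same curvature bound controls because the range of eta is an open interval inside
   the natural parameter space.  Hence L_n >= -2 on the box, whose prior mass is at least the
   model weight of S* times (lambda r exp(-lambda r))^|S*| exp(-lambda ||beta*||_1), and the
   assumption on lambda_n gives lambda r >= d^-5 and lambda r |S*| <= 1. *)

lemma continuous_inj_range_open_interval:
  fixes f :: "real \<Rightarrow> real"
  assumes f: "continuous_on UNIV f" and "inj f"
  shows "open (range f)" "is_interval (range f)"
  using invariance_of_domain[OF f open_UNIV] \<open>inj f\<close>
    connected_continuous_image[OF f connected_UNIV] is_interval_connected_1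
  by auto

lemma taylor_remainder_le:
  fixes A A1 A2 :: "real \<Rightarrow> real"
  assumes U: "is_interval U"
    and d1: "\<And>t. t \<in> U \<Longrightarrow> (A has_real_derivative A1 t) (at t)"
    and d2: "\<And>t. t \<in> U \<Longrightarrow> (A1 has_real_derivative A2 t) (at t)"
    and bd: "\<And>t. t \<in> U \<Longrightarrow> A2 t \<le> B"
    and x: "x \<in> U" and y: "y \<in> U"
  shows "A y - A x - (y - x) * A1 x \<le> B * (y - x)\<^sup>2 / 2"
proof (cases "x = y")
  case False
  define diff where "diff = (\<lambda>m::nat. if m = 0 then A else if m = 1 then A1 else A2)"
  have "min x y \<in> U" "max x y \<in> U" using x y by (simp_all add: min_def max_def)
  then have seg: "t \<in> U" if "min x y \<le> t" "t \<le> max x y" for t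
    using U that unfolding is_interval_1 by blast
  have "\<forall>m t. m < 2 \<and> min x y \<le> t \<and> t \<le> max x y \<longrightarrow> DERIV (diff m) t :> diff (Suc m) t"
    using d1 d2 seg by (auto simp: diff_def less_2_cases_iff)
  then obtain t where t: "if y < x then y < t \<and> t < x else x < t \<and> t < y"
    and eq: "A y = (\<Sum>m<2. diff m x / fact m * (y - x) ^ m) + diff 2 t / fact 2 * (y - x) ^ 2"
    using Taylor[of 2 diff A "min x y" "max x y" x y] False by (auto simp: diff_def)
  have "t \<in> U" using seg t by (auto split: if_splits)
  then have "A2 t / 2 * (y - x)\<^sup>2 \<le> B / 2 * (y - x)\<^sup>2"
    using bd by (intro mult_right_mono) auto
  moreover have "A y = A x + A1 x * (y - x) + A2 t / 2 * (y - x)\<^sup>2"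
    using eq by (simp add: diff_def numeral_2_eq_2 lessThan_Suc)
  ultimately show ?thesis by (simp add: algebra_simps)
qed simp

lemma exp_add_exp_minus_ge: "(x::real)\<^sup>2 / 2 + 2 \<le> exp x + exp (- x)"
proof -
  have *: "y\<^sup>2 / 2 + 2 \<le> exp y + exp (- y)" if "0 \<le> y" for y :: real
    using exp_lower_Taylor_quadratic[OF that] exp_ge_add_one_self[of "-y"] by simp
  show ?thesis using *[of x] *[of "-x"] by (cases "0 \<le> x") auto
qed

lemma exp_le_one_plus_e_mult:
  fixes p :: real
  assumes "0 \<le> p" "p \<le> 1"
  shows "exp p \<le> 1 + exp 1 * p"
proof -
  have "exp p \<le> 1 + p * exp p"
    using exp_ge_add_one_self[of "-p"] assms by (simp add: exp_minus field_simps)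
  also have "\<dots> \<le> 1 + p * exp 1" using assms by (intro add_left_mono mult_left_mono) auto
  finally show ?thesis by (simp add: mult.commute)
qed

lemma (in prob_space) nn_integral_square_le_exp_moments:
  fixes f :: "'a \<Rightarrow> real"
  assumes f[measurable]: "f \<in> borel_measurable M" and t: "0 < t"
    and pos: "(\<integral>\<^sup>+ x. ennreal (exp (t * f x)) \<partial>M) \<le> ennreal c"
    and neg: "(\<integral>\<^sup>+ x. ennreal (exp (- t * f x)) \<partial>M) \<le> ennreal c"
  shows "(\<integral>\<^sup>+ x. ennreal ((f x)\<^sup>2) \<partial>M) \<le> ennreal (4 * (c - 1) / t\<^sup>2)"
proof -
  define I where "I = (\<integral>\<^sup>+ x. ennreal ((f x)\<^sup>2) \<partial>M)"
  have "ennreal (t\<^sup>2 / 2) * I + 2 = (\<integral>\<^sup>+ x. ennreal (t\<^sup>2 / 2) * ennreal ((f x)\<^sup>2) + 2 \<partial>M)"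
    unfolding I_def by (subst nn_integral_add) (auto simp: nn_integral_cmult emeasure_space_1)
  also have "\<dots> = (\<integral>\<^sup>+ x. ennreal (t\<^sup>2 / 2 * (f x)\<^sup>2 + 2) \<partial>M)"
    by (simp flip: ennreal_mult)
  also have "\<dots> \<le> (\<integral>\<^sup>+ x. ennreal (exp (t * f x)) + ennreal (exp (- t * f x)) \<partial>M)"
  proof (rule nn_integral_mono)
    fix x
    have "t\<^sup>2 / 2 * (f x)\<^sup>2 + 2 \<le> exp (t * f x) + exp (- t * f x)"
      using exp_add_exp_minus_ge[of "t * f x"] by (simp add: power_mult_distrib)
    then show "ennreal (t\<^sup>2 / 2 * (f x)\<^sup>2 + 2) \<le> ennreal (exp (t * f x)) + ennreal (exp (- t * f x))"
      by (simp flip: ennreal_plus)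
  qed
  also have "\<dots> = (\<integral>\<^sup>+ x. ennreal (exp (t * f x)) \<partial>M) + (\<integral>\<^sup>+ x. ennreal (exp (- t * f x)) \<partial>M)"
    by (rule nn_integral_add) measurable
  also have "\<dots> \<le> ennreal c + ennreal c" using pos neg by (rule add_mono)
  finally have le: "ennreal (t\<^sup>2 / 2) * I + 2 \<le> ennreal c + ennreal c" .
  then have "I \<noteq> \<top>" using t by (auto simp: ennreal_mult_top top_unique)
  then obtain i where i: "I = ennreal i" "0 \<le> i" by (cases I) auto
  have "c \<ge> 1"
  proof (rule ccontr)
    assume "\<not> c \<ge> 1"
    then have "ennreal c + ennreal c < 2"
      by (cases "0 \<le> c") (auto simp: ennreal_neg simp flip: ennreal_plus)
    moreover have "2 \<le> ennreal (t\<^sup>2 / 2) * I + 2" by (simp add: add_increasing)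
    ultimately show False using le by (meson leD order.trans)
  qed
  have "ennreal (t\<^sup>2 / 2 * i + 2) = ennreal (t\<^sup>2 / 2) * I + 2"
    using i by (simp flip: ennreal_mult)
  also have "\<dots> \<le> ennreal (c + c)" using le \<open>c \<ge> 1\<close> by (simp flip: ennreal_plus)
  finally have "t\<^sup>2 / 2 * i + 2 \<le> c + c" using \<open>c \<ge> 1\<close> by simp
  then have "i \<le> 4 * (c - 1) / t\<^sup>2" using t by (simp add: field_simps)
  then show ?thesis using i unfolding I_def by (simp add: ennreal_leI)
qed

section \<open>Moments of exponential families\<close>

lemma expfam_okD:
  assumes "expfam_ok \<mu> h T A A1 A2"
  shows "sets \<mu> = sets borel" "h \<in> borel_measurable borel" "T \<in> borel_measurable borel"
    "\<And>y. 0 \<le> h y"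
    "\<And>\<theta>. \<theta> \<in> nat_param \<mu> h T \<Longrightarrow> (\<integral>y. h y * exp (\<theta> * T y) \<partial>\<mu>) = exp (A \<theta>)"
    "\<And>t. t \<in> nat_param \<mu> h T \<Longrightarrow> (A has_real_derivative A1 t) (at t within nat_param \<mu> h T)"
    "\<And>t. t \<in> nat_param \<mu> h T \<Longrightarrow> (A1 has_real_derivative A2 t) (at t within nat_param \<mu> h T)"
  using assms measurable_cong_sets[of \<mu> borel borel borel] unfolding expfam_ok_def by blast+

lemma sets_obs_dist:
  assumes "expfam_ok \<mu> h T A A1 A2"
  shows "sets (obs_dist \<mu> h T A \<theta>) = sets borel"
  using expfam_okD(1)[OF assms] by (simp add: obs_dist_def)

lemma nn_integral_obs_dist:
  assumes ok: "expfam_ok \<mu> h T A A1 A2" and f: "f \<in> borel_measurable borel"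
  shows "(\<integral>\<^sup>+ y. f y \<partial>obs_dist \<mu> h T A \<theta>) = (\<integral>\<^sup>+ y. ennreal (fam_density h T A \<theta> y) * f y \<partial>\<mu>)"
proof -
  note [measurable_cong] = expfam_okD(1)[OF ok] and [measurable] = expfam_okD(2,3)[OF ok] f
  show ?thesis unfolding obs_dist_def fam_density_def by (rule nn_integral_density) measurable
qed

lemma obs_dist_mgf:
  assumes ok: "expfam_ok \<mu> h T A A1 A2"
    and \<theta>: "\<theta> \<in> nat_param \<mu> h T" and \<theta>t: "\<theta> + t \<in> nat_param \<mu> h T"
  shows "(\<integral>\<^sup>+ y. ennreal (exp (t * (T y - m))) \<partial>obs_dist \<mu> h T A \<theta>)
       = ennreal (exp (A (\<theta> + t) - A \<theta> - t * m))"
proof -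
  note [measurable_cong] = expfam_okD(1)[OF ok] and [measurable] = expfam_okD(2,3)[OF ok]
  have int: "integrable \<mu> (\<lambda>y. h y * exp ((\<theta> + t) * T y))" using \<theta>t by (simp add: nat_param_def)
  have "(\<integral>\<^sup>+ y. ennreal (exp (t * (T y - m))) \<partial>obs_dist \<mu> h T A \<theta>)
      = (\<integral>\<^sup>+ y. ennreal (exp (- A \<theta> - t * m)) * ennreal (h y * exp ((\<theta> + t) * T y)) \<partial>\<mu>)"
  proof (subst nn_integral_obs_dist[OF ok], measurable, rule nn_integral_cong)
    fix y
    have "fam_density h T A \<theta> y * exp (t * (T y - m)) = exp (- A \<theta> - t * m) * (h y * exp ((\<theta> + t) * T y))"
      by (simp add: fam_density_def algebra_simps flip: exp_add)
    then show "ennreal (fam_density h T A \<theta> y) * ennreal (exp (t * (T y - m)))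
        = ennreal (exp (- A \<theta> - t * m)) * ennreal (h y * exp ((\<theta> + t) * T y))"
      by (simp add: fam_density_def expfam_okD(4)[OF ok] flip: ennreal_mult)
  qed
  also have "\<dots> = ennreal (exp (- A \<theta> - t * m)) * ennreal (\<integral>y. h y * exp ((\<theta> + t) * T y) \<partial>\<mu>)"
    by (simp add: nn_integral_cmult nn_integral_eq_integral[OF int] expfam_okD(4)[OF ok])
  also have "\<dots> = ennreal (exp (A (\<theta> + t) - A \<theta> - t * m))"
    by (simp only: expfam_okD(5)[OF ok \<theta>t]) (simp add: algebra_simps flip: ennreal_mult exp_add)
  finally show ?thesis .
qed

lemma prob_space_obs_dist:
  assumes ok: "expfam_ok \<mu> h T A A1 A2" and \<theta>: "\<theta> \<in> nat_param \<mu> h T"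
  shows "prob_space (obs_dist \<mu> h T A \<theta>)"
proof
  have "space (obs_dist \<mu> h T A \<theta>) = UNIV"
    using sets_eq_imp_space_eq[OF sets_obs_dist[OF ok]] by simp
  then show "emeasure (obs_dist \<mu> h T A \<theta>) (space (obs_dist \<mu> h T A \<theta>)) = 1"
    using obs_dist_mgf[OF ok \<theta>, of 0 0] \<theta> by simp
qed

lemma obs_dist_second_moment_le:
  assumes ok: "expfam_ok \<mu> h T A A1 A2"
    and U: "open U" "is_interval U" "U \<subseteq> nat_param \<mu> h T"
    and d1: "\<And>t. t \<in> U \<Longrightarrow> (A has_real_derivative A1 t) (at t)"
    and d2: "\<And>t. t \<in> U \<Longrightarrow> (A1 has_real_derivative A2 t) (at t)"
    and bd: "\<And>t. t \<in> U \<Longrightarrow> A2 t \<le> B" and B: "0 < B"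
    and \<theta>: "\<theta> \<in> U"
  shows "(\<integral>\<^sup>+ y. ennreal ((T y - A1 \<theta>)\<^sup>2) \<partial>obs_dist \<mu> h T A \<theta>) \<le> ennreal (2 * exp 1 * B)"
proof -
  note [measurable_cong] = sets_obs_dist[OF ok] and [measurable] = expfam_okD(3)[OF ok]
  interpret prob_space "obs_dist \<mu> h T A \<theta>"
    using prob_space_obs_dist[OF ok] \<theta> U(3) by blast
  obtain e where e: "e > 0" "ball \<theta> e \<subseteq> U" using U(1) \<theta> open_contains_ball by blast
  define t where "t = min (e / 2) (1 / sqrt B)"
  define p where "p = B * t\<^sup>2 / 2"
  have t: "0 < t" using e B by (simp add: t_def)
  have "t\<^sup>2 \<le> (1 / sqrt B)\<^sup>2" using t by (intro power_mono) (auto simp: t_def)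
  then have p: "0 \<le> p" "p \<le> 1" using B by (auto simp: p_def power_divide field_simps)
  have mgf: "(\<integral>\<^sup>+ y. ennreal (exp (\<sigma> * (T y - A1 \<theta>))) \<partial>obs_dist \<mu> h T A \<theta>) \<le> ennreal (exp p)"
    if "\<sigma> = t \<or> \<sigma> = - t" for \<sigma>
  proof -
    have "\<theta> + \<sigma> \<in> U" using that e t by (intro subsetD[OF e(2)]) (auto simp: t_def dist_real_def)
    then have rem: "A (\<theta> + \<sigma>) - A \<theta> - \<sigma> * A1 \<theta> \<le> p"
      using taylor_remainder_le[OF U(2) d1 d2 bd \<theta>, of "\<theta> + \<sigma>"] that by (auto simp: p_def)
    have "\<theta> \<in> nat_param \<mu> h T" "\<theta> + \<sigma> \<in> nat_param \<mu> h T" using \<theta> \<open>\<theta> + \<sigma> \<in> U\<close> U(3) by auto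
    then show ?thesis using rem by (simp add: obs_dist_mgf[OF ok])
  qed
  have "(\<integral>\<^sup>+ y. ennreal ((T y - A1 \<theta>)\<^sup>2) \<partial>obs_dist \<mu> h T A \<theta>) \<le> ennreal (4 * (exp p - 1) / t\<^sup>2)"
    using mgf[of t] mgf[of "- t"] t by (intro nn_integral_square_le_exp_moments) auto
  also have "4 * (exp p - 1) / t\<^sup>2 \<le> 2 * exp 1 * B"
    using exp_le_one_plus_e_mult[OF p] t by (simp add: p_def field_simps)
  finally show ?thesis by (simp add: ennreal_leI)
qed

lemma (in prob_space) nn_integral_abs_sub_expectation_le:
  fixes f :: "'a \<Rightarrow> real"
  assumes f[measurable]: "f \<in> borel_measurable M" and K: "0 \<le> K"
    and bd: "(\<integral>\<^sup>+ x. ennreal \<bar>f x - m\<bar> \<partial>M) \<le> ennreal K"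
  shows "(\<integral>\<^sup>+ x. ennreal \<bar>f x - expectation f\<bar> \<partial>M) \<le> ennreal (2 * K)"
proof -
  have int: "integrable M (\<lambda>x. f x - m)"
  proof (rule integrableI_bounded)
    show "(\<integral>\<^sup>+ x. ennreal (norm (f x - m)) \<partial>M) < \<infinity>"
      using le_less_trans[OF bd] by simp
  qed measurable
  then have "integrable M f"
    using Bochner_Integration.integrable_add[OF int integrable_const[of m]] by simp
  have "ennreal (expectation (\<lambda>x. \<bar>f x - m\<bar>)) = (\<integral>\<^sup>+ x. ennreal \<bar>f x - m\<bar> \<partial>M)"
    by (rule nn_integral_eq_integral[symmetric]) (use int in auto)
  also note bd
  finally have "expectation (\<lambda>x. \<bar>f x - m\<bar>) \<le> K" using ennreal_le_iff[OF K] by blast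
  then have "\<bar>expectation (\<lambda>x. f x - m)\<bar> \<le> K" by (rule order_trans[OF integral_abs_bound])
  then have mean: "\<bar>expectation f - m\<bar> \<le> K"
    using \<open>integrable M f\<close> by (simp add: prob_space)
  have "(\<integral>\<^sup>+ x. ennreal \<bar>f x - expectation f\<bar> \<partial>M) \<le> (\<integral>\<^sup>+ x. ennreal (\<bar>f x - m\<bar> + K) \<partial>M)"
    using mean by (intro nn_integral_mono ennreal_leI) linarith
  also have "\<dots> = (\<integral>\<^sup>+ x. ennreal \<bar>f x - m\<bar> \<partial>M) + ennreal K"
    using K by (simp add: nn_integral_add emeasure_space_1)
  also have "\<dots> \<le> ennreal K + ennreal K" using bd by (rule add_right_mono)
  also have "\<dots> = ennreal (2 * K)" using K by (metis ennreal_plus mult_2)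
  finally show ?thesis .
qed

lemma obs_dist_abs_central_moment_le:
  assumes ok: "expfam_ok \<mu> h T A A1 A2"
    and U: "open U" "is_interval U" "U \<subseteq> nat_param \<mu> h T"
    and d1: "\<And>t. t \<in> U \<Longrightarrow> (A has_real_derivative A1 t) (at t)"
    and d2: "\<And>t. t \<in> U \<Longrightarrow> (A1 has_real_derivative A2 t) (at t)"
    and bd: "\<And>t. t \<in> U \<Longrightarrow> A2 t \<le> B" and B: "0 < B"
    and \<theta>: "\<theta> \<in> U"
  shows "(\<integral>\<^sup>+ y. ennreal \<bar>T y - (\<integral>z. T z \<partial>obs_dist \<mu> h T A \<theta>)\<bar> \<partial>obs_dist \<mu> h T A \<theta>)
       \<le> ennreal (2 * (1 + 2 * exp 1 * B))"
proof -
  note [measurable_cong] = sets_obs_dist[OF ok] and [measurable] = expfam_okD(3)[OF ok]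
  interpret prob_space "obs_dist \<mu> h T A \<theta>"
    using prob_space_obs_dist[OF ok] \<theta> U(3) by blast
  have "(\<integral>\<^sup>+ y. ennreal \<bar>T y - A1 \<theta>\<bar> \<partial>obs_dist \<mu> h T A \<theta>)
      \<le> (\<integral>\<^sup>+ y. 1 + ennreal ((T y - A1 \<theta>)\<^sup>2) \<partial>obs_dist \<mu> h T A \<theta>)"
  proof (rule nn_integral_mono)
    fix y
    have "\<bar>x\<bar> \<le> 1 + x\<^sup>2" for x :: real
      using zero_le_power2[of "\<bar>x\<bar> - 1"] by (simp add: power2_diff)
    then have "ennreal \<bar>T y - A1 \<theta>\<bar> \<le> ennreal (1 + (T y - A1 \<theta>)\<^sup>2)" by (rule ennreal_leI)
    then show "ennreal \<bar>T y - A1 \<theta>\<bar> \<le> 1 + ennreal ((T y - A1 \<theta>)\<^sup>2)" by simp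
  qed
  also have "\<dots> = 1 + (\<integral>\<^sup>+ y. ennreal ((T y - A1 \<theta>)\<^sup>2) \<partial>obs_dist \<mu> h T A \<theta>)"
    by (simp add: nn_integral_add emeasure_space_1)
  also have "\<dots> \<le> 1 + ennreal (2 * exp 1 * B)"
    using obs_dist_second_moment_le[OF ok U d1 d2 bd B \<theta>] by (rule add_left_mono)
  also have "\<dots> = ennreal (1 + 2 * exp 1 * B)" using B by simp
  finally show ?thesis
    using B by (intro nn_integral_abs_sub_expectation_le) auto
qed

section \<open>Markov's inequality on product spaces\<close>

lemma (in prob_space) prob_bounded_ge_Markov:
  fixes f :: "'a \<Rightarrow> real"
  assumes f[measurable]: "f \<in> borel_measurable M" and nonneg: "\<And>x. 0 \<le> f x"
    and bd: "(\<integral>\<^sup>+ x. ennreal (f x) \<partial>M) \<le> ennreal c" and "0 \<le> c" "0 < R"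
  shows "prob {x \<in> space M. f x \<le> R} \<ge> 1 - c / R"
proof -
  have "space M - {x \<in> space M. f x \<le> R} \<subseteq> {x \<in> space M. 1 \<le> ennreal (1 / R) * ennreal (f x)}"
    using \<open>0 < R\<close> nonneg by (auto simp: field_simps simp flip: ennreal_mult)
  then have "emeasure M (space M - {x \<in> space M. f x \<le> R})
      \<le> emeasure M {x \<in> space M. 1 \<le> ennreal (1 / R) * ennreal (f x)}"
    by (rule emeasure_mono) measurable
  also have "\<dots> \<le> ennreal (1 / R) * (\<integral>\<^sup>+ x. ennreal (f x) * indicator (space M) x \<partial>M)"
    by (rule nn_integral_Markov_inequality) auto
  also have "(\<integral>\<^sup>+ x. ennreal (f x) * indicator (space M) x \<partial>M) = (\<integral>\<^sup>+ x. ennreal (f x) \<partial>M)"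
    by (intro nn_integral_cong) simp
  also have "ennreal (1 / R) * \<dots> \<le> ennreal (1 / R) * ennreal c" using bd by (rule mult_left_mono) simp
  also have "\<dots> = ennreal (c / R)" using \<open>0 < R\<close> \<open>0 \<le> c\<close> by (simp flip: ennreal_mult)
  finally show ?thesis
    using prob_compl[of "{x \<in> space M. f x \<le> R}"] \<open>0 < R\<close> \<open>0 \<le> c\<close>
    by (simp add: emeasure_eq_measure ennreal_le_iff)
qed

lemma nn_integral_PiM_component:
  assumes "\<And>i. i \<in> I \<Longrightarrow> prob_space (M i)" "i \<in> I" "g \<in> borel_measurable (M i)"
  shows "(\<integral>\<^sup>+ x. g (x i) \<partial>PiM I M) = (\<integral>\<^sup>+ y. g y \<partial>M i)"
proof -
  have "(\<integral>\<^sup>+ y. g y \<partial>M i) = (\<integral>\<^sup>+ y. g y \<partial>distr (PiM I M) (M i) (\<lambda>x. x i))"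
    using assms by (simp add: distr_PiM_component)
  also have "\<dots> = (\<integral>\<^sup>+ x. g (x i) \<partial>PiM I M)"
    using assms by (intro nn_integral_distr) auto
  finally show ?thesis ..
qed

lemma PiM_sum_Markov:
  fixes M :: "nat \<Rightarrow> 'a measure" and f :: "nat \<Rightarrow> 'a \<Rightarrow> real"
  assumes prob: "\<And>i. i < n \<Longrightarrow> prob_space (M i)"
    and f: "\<And>i. i < n \<Longrightarrow> f i \<in> borel_measurable (M i)" and nonneg: "\<And>i y. 0 \<le> f i y"
    and bd: "\<And>i. i < n \<Longrightarrow> (\<integral>\<^sup>+ y. ennreal (f i y) \<partial>M i) \<le> ennreal K"
    and "0 \<le> K" "0 < R"
  shows "\<exists>E \<in> sets (PiM {..<n} M). measure (PiM {..<n} M) E \<ge> 1 - real n * K / R \<and>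
           (\<forall>y\<in>E. (\<Sum>i<n. f i (y i)) \<le> R)"
proof -
  interpret P: prob_space "PiM {..<n} M" using prob by (intro prob_space_PiM) auto
  have comp[measurable]: "(\<lambda>y. f i (y i)) \<in> borel_measurable (PiM {..<n} M)" if "i < n" for i
    using that by (intro measurable_compose[OF measurable_component_singleton[of i] f]) auto
  have "(\<integral>\<^sup>+ y. ennreal (\<Sum>i<n. f i (y i)) \<partial>PiM {..<n} M)
      = (\<integral>\<^sup>+ y. (\<Sum>i<n. ennreal (f i (y i))) \<partial>PiM {..<n} M)"
    using nonneg by (simp add: sum_ennreal)
  also have "\<dots> = (\<Sum>i<n. \<integral>\<^sup>+ y. ennreal (f i (y i)) \<partial>PiM {..<n} M)"
    by (rule nn_integral_sum) auto
  also have "\<dots> = (\<Sum>i<n. \<integral>\<^sup>+ y. ennreal (f i y) \<partial>M i)"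
  proof (intro sum.cong refl)
    fix i assume "i \<in> {..<n}"
    then show "(\<integral>\<^sup>+ y. ennreal (f i (y i)) \<partial>PiM {..<n} M) = (\<integral>\<^sup>+ y. ennreal (f i y) \<partial>M i)"
      using prob f by (intro nn_integral_PiM_component) auto
  qed
  also have "\<dots> \<le> ennreal (real n * K)"
    using bd \<open>0 \<le> K\<close> sum_mono[of "{..<n}" "\<lambda>i. \<integral>\<^sup>+ y. ennreal (f i y) \<partial>M i" "\<lambda>_. ennreal K"]
    by (simp add: ennreal_of_nat_eq_real_of_nat ennreal_mult)
  finally have "P.prob {y \<in> space (PiM {..<n} M). (\<Sum>i<n. f i (y i)) \<le> R} \<ge> 1 - real n * K / R"
    using nonneg \<open>0 \<le> K\<close> \<open>0 < R\<close> by (intro P.prob_bounded_ge_Markov) (auto intro: sum_nonneg)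
  then show ?thesis by (intro bexI[of _ "{y \<in> space (PiM {..<n} M). (\<Sum>i<n. f i (y i)) \<le> R}"]) auto
qed

section \<open>Prior mass of a box\<close>

lemma emeasure_laplace_interval_ge:
  assumes lam: "0 < lam" and r: "0 < r"
  shows "ennreal (lam * r * exp (- lam * (\<bar>c\<bar> + r)))
         \<le> emeasure (density lborel (\<lambda>x. ennreal (laplace_density lam x))) {c - r..c + r}"
proof -
  have "ennreal (lam * r * exp (- lam * (\<bar>c\<bar> + r)))
      = (\<integral>\<^sup>+ x. ennreal (lam / 2 * exp (- lam * (\<bar>c\<bar> + r))) * indicator {c - r..c + r} x \<partial>lborel)"
    using lam r by (simp add: nn_integral_cmult_indicator flip: ennreal_mult)
  also have "\<dots> \<le> (\<integral>\<^sup>+ x. ennreal (laplace_density lam x) * indicator {c - r..c + r} x \<partial>lborel)"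
  proof (intro nn_integral_mono)
    fix x
    have "\<bar>x\<bar> \<le> \<bar>c\<bar> + r" if "x \<in> {c - r..c + r}" using that by auto
    then show "ennreal (lam / 2 * exp (- lam * (\<bar>c\<bar> + r))) * indicator {c - r..c + r} x
        \<le> ennreal (laplace_density lam x) * indicator {c - r..c + r} x"
      using lam by (auto simp: laplace_density_def split: split_indicator intro!: ennreal_leI)
  qed
  also have "\<dots> = emeasure (density lborel (\<lambda>x. ennreal (laplace_density lam x))) {c - r..c + r}"
    by (rule emeasure_density[symmetric]) (auto simp: laplace_density_def)
  finally show ?thesis .
qed

lemma sigma_finite_coord_prior: "sigma_finite_measure (coord_prior lam S j)"
proof -
  have "(\<lambda>x. ennreal (laplace_density lam x)) \<in> borel_measurable lborel"
    unfolding laplace_density_def by measurable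
  then show ?thesis
    by (simp add: coord_prior_def prob_space_return prob_space_imp_sigma_finite
        sigma_finite_measure.sigma_finite_iff_density_finite[OF sigma_finite_lborel])
qed

definition prior_box :: "nat \<Rightarrow> nat set \<Rightarrow> (nat \<Rightarrow> real) \<Rightarrow> real \<Rightarrow> (nat \<Rightarrow> real) set" where
  "prior_box d S c r = PiE {..<d} (\<lambda>j. if j \<in> S then {c j - r..c j + r} else {0})"

lemma prior_integral_ge_box:
  fixes g :: "(nat \<Rightarrow> real) \<Rightarrow> ennreal"
  assumes S: "S \<subseteq> {..<d}" and lam: "0 < lam" and r: "0 < r" and \<kappa>: "0 \<le> \<kappa>"
    and g: "\<And>\<beta>. \<beta> \<in> prior_box d S c r \<Longrightarrow> ennreal \<kappa> \<le> g \<beta>"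
  shows "ennreal (model_weight d a S * \<kappa> * (\<Prod>j\<in>S. lam * r * exp (- lam * (\<bar>c j\<bar> + r))))
         \<le> prior_integral d a lam g"
proof -
  let ?P = "PiM {..<d} (coord_prior lam S)"
  let ?I = "\<lambda>j. if j \<in> S then {c j - r..c j + r} else {0}"
  interpret product_sigma_finite "coord_prior lam S"
    by (simp add: product_sigma_finite_def sigma_finite_coord_prior)
  have sets: "?I j \<in> sets (coord_prior lam S j)" for j
    by (simp add: coord_prior_def)
  have "(\<Prod>j\<in>S. ennreal (lam * r * exp (- lam * (\<bar>c j\<bar> + r))))
      \<le> (\<Prod>j\<in>S. emeasure (coord_prior lam S j) (?I j))"
    using emeasure_laplace_interval_ge[OF lam r] by (intro prod_mono_ennreal) (simp add: coord_prior_def)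
  also have "\<dots> = (\<Prod>j<d. emeasure (coord_prior lam S j) (?I j))"
    using S by (intro prod.mono_neutral_left) (auto simp: coord_prior_def)
  also have "\<dots> = emeasure ?P (prior_box d S c r)"
    unfolding prior_box_def by (rule emeasure_PiM[symmetric]) (auto simp: sets)
  finally have mass: "ennreal (\<Prod>j\<in>S. lam * r * exp (- lam * (\<bar>c j\<bar> + r))) \<le> emeasure ?P (prior_box d S c r)"
    using lam r by (simp add: prod_ennreal)
  have box: "prior_box d S c r \<in> sets ?P"
    unfolding prior_box_def by (rule sets_PiM_I_finite) (auto simp: sets)
  have "0 \<le> model_weight d a S" by (simp add: model_weight_def C_norm_def sum_nonneg)
  then have "ennreal (model_weight d a S * \<kappa> * (\<Prod>j\<in>S. lam * r * exp (- lam * (\<bar>c j\<bar> + r))))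
      = ennreal (model_weight d a S) * (ennreal \<kappa> * ennreal (\<Prod>j\<in>S. lam * r * exp (- lam * (\<bar>c j\<bar> + r))))"
    using \<kappa> by (simp add: ennreal_mult' mult.assoc)
  also have "\<dots> \<le> ennreal (model_weight d a S) * (ennreal \<kappa> * emeasure ?P (prior_box d S c r))"
    using mass by (intro mult_left_mono) auto
  also have "ennreal \<kappa> * emeasure ?P (prior_box d S c r) = (\<integral>\<^sup>+ \<beta>. ennreal \<kappa> * indicator (prior_box d S c r) \<beta> \<partial>?P)"
    using box by (rule nn_integral_cmult_indicator[symmetric])
  also have "\<dots> \<le> (\<integral>\<^sup>+ \<beta>. g \<beta> \<partial>?P)"
    using g by (intro nn_integral_mono) (simp split: split_indicator)
  also have "ennreal (model_weight d a S) * \<dots> \<le> prior_integral d a lam g"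
    unfolding prior_integral_def using S
    by (intro member_le_sum[where f = "\<lambda>S. ennreal (model_weight d a S) * (\<integral>\<^sup>+ \<beta>. g \<beta> \<partial>PiM {..<d} (coord_prior lam S))"]) auto
  finally show ?thesis by (simp add: mult_left_mono)
qed

lemma prior_box_mass_ge:
  fixes c :: "nat \<Rightarrow> real"
  assumes S: "S \<subseteq> {..<d}" and d: "1 \<le> d" and lam: "0 < lam" and r: "0 < r"
    and lr: "real d powr (-5) \<le> lam * r" and lrs: "lam * r * real (card S) \<le> 1"
  shows "exp (-1) * C_norm d a * real d powr (- (a + 6) * real (card S)) * exp (- lam * (\<Sum>j\<in>S. \<bar>c j\<bar>))
       \<le> model_weight d a S * (\<Prod>j\<in>S. lam * r * exp (- lam * (\<bar>c j\<bar> + r)))"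
proof -
  define s where "s = card S"
  have "finite S" using S finite_subset by blast
  have C: "0 \<le> C_norm d a" by (simp add: C_norm_def sum_nonneg)
  have "s \<le> d" using card_mono[OF _ S] by (simp add: s_def)
  then have binom: "real (d choose s) \<le> real d ^ s" "0 < real (d choose s)"
    by (simp_all add: binomial_le_pow flip: of_nat_power)
  have "real d powr (- real s) = 1 / real d ^ s"
    using d by (simp add: powr_minus powr_realpow divide_inverse)
  also have "\<dots> \<le> 1 / real (d choose s)" using binom d by (intro divide_left_mono mult_pos_pos) auto
  finally have b1: "real d powr (- real s) \<le> 1 / real (d choose s)" .
  have "real d powr (- 5 * real s) = (real d powr (-5)) ^ s"
    using d by (simp add: powr_realpow[symmetric] powr_powr)
  also have "\<dots> \<le> (lam * r) ^ s" using lr by (intro power_mono) auto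
  finally have b2: "real d powr (- 5 * real s) \<le> (lam * r) ^ s" .
  have b3: "exp (-1) \<le> exp (- (lam * r * real s))" using lrs by (simp add: s_def)
  have "(\<Prod>j\<in>S. lam * r * exp (- lam * (\<bar>c j\<bar> + r)))
      = (\<Prod>j\<in>S. lam * r * exp (- (lam * r)) * exp (- lam * \<bar>c j\<bar>))"
    by (intro prod.cong refl) (simp add: algebra_simps flip: exp_add)
  also have "\<dots> = (lam * r) ^ s * exp (- (lam * r * real s)) * exp (- lam * (\<Sum>j\<in>S. \<bar>c j\<bar>))"
    using \<open>finite S\<close> by (simp add: prod.distrib power_mult_distrib exp_sum sum_distrib_left s_def
        flip: exp_of_nat_mult)
  finally have prod: "(\<Prod>j\<in>S. lam * r * exp (- lam * (\<bar>c j\<bar> + r)))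
      = (lam * r) ^ s * exp (- (lam * r * real s)) * exp (- lam * (\<Sum>j\<in>S. \<bar>c j\<bar>))" .
  have "exp (-1) * C_norm d a * real d powr (- (a + 6) * real s) * exp (- lam * (\<Sum>j\<in>S. \<bar>c j\<bar>))
      = C_norm d a * real d powr (- real s) * real d powr (- a * real s) * real d powr (- 5 * real s)
        * exp (-1) * exp (- lam * (\<Sum>j\<in>S. \<bar>c j\<bar>))"
    by (simp add: algebra_simps flip: powr_add)
  also have "\<dots> \<le> C_norm d a * (1 / real (d choose s)) * real d powr (- a * real s) * (lam * r) ^ s
        * exp (- (lam * r * real s)) * exp (- lam * (\<Sum>j\<in>S. \<bar>c j\<bar>))"
    using b1 b2 b3 C lam r by (intro mult_right_mono mult_left_mono mult_mono) auto
  also have "\<dots> = model_weight d a S * (\<Prod>j\<in>S. lam * r * exp (- lam * (\<bar>c j\<bar> + r)))"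
    unfolding prod by (simp add: model_weight_def s_def)
  finally show ?thesis by (simp add: s_def)
qed

section \<open>The clipped GLM\<close>

lemma abs_le_Xnorm: "i < n \<Longrightarrow> j < d \<Longrightarrow> \<bar>X i j\<bar> \<le> Xnorm X n d"
proof -
  assume "i < n" "j < d"
  have "{\<bar>X i j\<bar> | i j. i < n \<and> j < d} = (\<lambda>(i, j). \<bar>X i j\<bar>) ` ({..<n} \<times> {..<d})" by auto
  then have "finite {\<bar>X i j\<bar> | i j. i < n \<and> j < d}" by simp
  then show ?thesis unfolding Xnorm_def using \<open>i < n\<close> \<open>j < d\<close> by (intro Max_ge) auto
qed

lemma one_le_M1: "0 < M0 \<Longrightarrow> 1 \<le> M1 M0"
  unfolding M1_def by (intro one_le_inverse) auto

lemma lin_pred_diff_le_on_box: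
  assumes \<beta>: "\<beta> \<in> prior_box d S c r" and S: "S \<subseteq> {..<d}"
    and c: "\<And>j. j < d \<Longrightarrow> j \<notin> S \<Longrightarrow> c j = 0" and X: "\<And>j. j < d \<Longrightarrow> \<bar>X i j\<bar> \<le> m"
  shows "\<bar>lin_pred X d \<beta> i - lin_pred X d c i\<bar> \<le> m * r * real (card S)"
proof -
  have "lin_pred X d \<beta> i - lin_pred X d c i = (\<Sum>j<d. X i j * (\<beta> j - c j))"
    unfolding lin_pred_def by (simp add: sum_subtractf algebra_simps)
  then have "\<bar>lin_pred X d \<beta> i - lin_pred X d c i\<bar> \<le> (\<Sum>j<d. \<bar>X i j\<bar> * \<bar>\<beta> j - c j\<bar>)"
    using sum_abs[of "\<lambda>j. X i j * (\<beta> j - c j)" "{..<d}"] by (simp add: abs_mult)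
  also have "\<dots> \<le> (\<Sum>j<d. if j \<in> S then m * r else 0)"
  proof (rule sum_mono)
    fix j assume j: "j \<in> {..<d}"
    then have \<beta>j: "\<beta> j \<in> (if j \<in> S then {c j - r..c j + r} else {0})"
      by (rule PiE_mem[OF \<beta>[unfolded prior_box_def]])
    show "\<bar>X i j\<bar> * \<bar>\<beta> j - c j\<bar> \<le> (if j \<in> S then m * r else 0)"
    proof (cases "j \<in> S")
      case True
      have "\<bar>X i j\<bar> \<le> m" "\<bar>\<beta> j - c j\<bar> \<le> r" using X j \<beta>j True by auto
      then show ?thesis using True abs_ge_zero[of "X i j"] abs_ge_zero[of "\<beta> j - c j"]
        by (simp add: mult_mono)
    next
      case False
      then show ?thesis using \<beta>j c[of j] j by simp
    qed
  qed
  also have "\<dots> = m * r * real (card S)"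
    using S by (simp add: sum.If_cases Int_absorb1)
  finally show ?thesis .
qed

lemma Ln_ge_minus_two:
  fixes \<beta> \<beta>s :: "nat \<Rightarrow> real" and X :: "nat \<Rightarrow> nat \<Rightarrow> real" and d :: nat and \<eta> :: "real \<Rightarrow> real"
  defines "e \<equiv> \<lambda>i. \<eta> (lin_pred X d \<beta> i)" and "es \<equiv> \<lambda>i. \<eta> (lin_pred X d \<beta>s i)"
  assumes R: "(\<Sum>i<n. \<bar>T (y i) - (\<integral>z. T z \<partial>obs_dist \<mu> h T A (es i))\<bar>) \<le> R"
    and close: "\<And>i. i < n \<Longrightarrow> \<bar>e i - es i\<bar> \<le> \<delta>"
    and bregman: "\<And>i. i < n \<Longrightarrow> A (e i) - A (es i) - (e i - es i) * A1 (es i) \<le> B * (e i - es i)\<^sup>2 / 2"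
    and "0 \<le> B" "0 \<le> \<delta>" "\<delta> * R \<le> 1" "real n * B * \<delta>\<^sup>2 / 2 \<le> 1"
  shows "-2 \<le> Ln \<mu> h T A A1 \<eta> X n d \<beta>s \<beta> y"
proof -
  let ?ET = "\<lambda>i. \<integral>z. T z \<partial>obs_dist \<mu> h T A (es i)"
  have "(\<Sum>i<n. \<bar>T (y i) - ?ET i\<bar> * \<delta>) \<le> R * \<delta>"
    using R \<open>0 \<le> \<delta>\<close> by (simp add: mult_right_mono flip: sum_distrib_right)
  then have "- (\<delta> * R) \<le> - (\<Sum>i<n. \<bar>T (y i) - ?ET i\<bar> * \<delta>)" by (simp add: mult.commute)
  also have "\<dots> \<le> (\<Sum>i<n. (T (y i) - ?ET i) * (e i - es i))"
  proof (subst sum_negf[symmetric], rule sum_mono)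
    fix i assume "i \<in> {..<n}"
    then have "\<bar>(T (y i) - ?ET i) * (e i - es i)\<bar> \<le> \<bar>T (y i) - ?ET i\<bar> * \<delta>"
      using close by (simp add: abs_mult mult_left_mono)
    then show "- (\<bar>T (y i) - ?ET i\<bar> * \<delta>) \<le> (T (y i) - ?ET i) * (e i - es i)" by linarith
  qed
  finally have Z: "- 1 \<le> (\<Sum>i<n. (T (y i) - ?ET i) * (e i - es i))" using \<open>\<delta> * R \<le> 1\<close> by linarith
  have "(\<Sum>i<n. A (e i) - A (es i) - (e i - es i) * A1 (es i)) \<le> (\<Sum>i<n. B * \<delta>\<^sup>2 / 2)"
  proof (rule sum_mono)
    fix i assume i: "i \<in> {..<n}"
    have "(e i - es i)\<^sup>2 \<le> \<delta>\<^sup>2" using close[of i] i by (metis abs_ge_zero power2_abs power_mono lessThan_iff)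
    then have "B * (e i - es i)\<^sup>2 / 2 \<le> B * \<delta>\<^sup>2 / 2" using \<open>0 \<le> B\<close> by (simp add: mult_left_mono)
    then show "A (e i) - A (es i) - (e i - es i) * A1 (es i) \<le> B * \<delta>\<^sup>2 / 2" using bregman[of i] i by simp
  qed
  then have D: "(\<Sum>i<n. A (e i) - A (es i) - (e i - es i) * A1 (es i)) \<le> 1"
    using \<open>real n * B * \<delta>\<^sup>2 / 2 \<le> 1\<close> by simp
  show ?thesis using Z D unfolding Ln_def Let_def e_def es_def by linarith
qed

lemma prior_radius_bounds:
  fixes m M L K lam :: real and n d s :: nat
  defines "r \<equiv> 1 / (K * (real n)\<^sup>2 * L * m * real s)"
  assumes m: "0 < m" and M: "1 \<le> M" "M \<le> L" and K: "1 \<le> K" and LK: "L * K \<le> real n"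
    and nd: "n < d" and s: "0 < s" "real s * ln (real d) \<le> real n" and ln: "1 \<le> ln (real d)"
    and lam: "m * M / real d \<le> lam" "lam \<le> m * M * sqrt (ln (real d))"
  shows "real d powr (-5) \<le> lam * r" "lam * r * real s \<le> 1"
proof -
  have L: "1 \<le> L" using M by linarith
  have "1 * 1 \<le> L * K" using L K by (intro mult_mono) auto
  then have n: "1 \<le> real n" using LK by linarith
  have s_ln: "real s * 1 \<le> real s * ln (real d)" using ln by (intro mult_left_mono) auto
  have sd: "real s \<le> real d" using s_ln s(2) nd by linarith
  have den: "0 < K * (real n)\<^sup>2 * L * m * real s" using K n L m s by simp
  have "real d * (L * K) * (real n)\<^sup>2 * real s \<le> real d * real d * (real d)\<^sup>2 * real d"
    using LK nd sd n L K by (intro mult_mono power_mono) auto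
  then have "1 / real d ^ 5 \<le> 1 / (real d * (L * K) * (real n)\<^sup>2 * real s)"
    using n L K s nd by (intro divide_left_mono) (auto simp: eval_nat_numeral power2_eq_square)
  also have "\<dots> \<le> M / (real d * (L * K) * (real n)\<^sup>2 * real s)"
    using M n L K s nd by (intro divide_right_mono) auto
  also have "\<dots> = m * M / real d * r" using m nd by (simp add: r_def field_simps power2_eq_square)
  also have "\<dots> \<le> lam * r" using lam(1) den by (intro mult_right_mono) (auto simp: r_def)
  finally show "real d powr (-5) \<le> lam * r" using nd by (simp add: powr_minus divide_inverse)
  have "lam * r * real s \<le> m * M * sqrt (ln (real d)) * r * real s"
    using lam(2) den by (intro mult_right_mono) (auto simp: r_def)
  also have "\<dots> = (M / L) * (sqrt (ln (real d)) / (K * (real n)\<^sup>2))"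
    using m s L by (simp add: r_def field_simps)
  also have "\<dots> \<le> 1 * (ln (real d) / (K * (real n)\<^sup>2))"
  proof (intro mult_mono divide_right_mono)
    have "sqrt (ln (real d)) \<le> sqrt (ln (real d) * ln (real d))"
      using ln by (intro real_sqrt_le_mono) (simp add: mult_le_cancel_left1)
    then show "sqrt (ln (real d)) \<le> ln (real d)" using ln by simp
  qed (use M L K ln in auto)
  also have "\<dots> \<le> real n / (K * (real n)\<^sup>2)"
  proof -
    have "1 * ln (real d) \<le> real s * ln (real d)" using s ln by (intro mult_right_mono) auto
    then show ?thesis using s(2) K by (simp add: divide_right_mono)
  qed
  also have "\<dots> \<le> 1"
    using K n mult_mono[OF K n] by (simp add: power2_eq_square field_simps)
  finally show "lam * r * real s \<le> 1" .
qed

locale clipped_glm =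
  fixes \<mu> :: "real measure" and h T A A1 A2 :: "real \<Rightarrow> real" and M0 :: real and \<eta> :: "real \<Rightarrow> real"
  assumes expfam: "expfam_ok \<mu> h T A A1 A2" and clip: "clip_ok \<mu> h T A2 M0 \<eta>"
begin

definition curvature_bound :: real where
  "curvature_bound = M0\<^sup>2 / 2"

(* E (T - A1 theta)^2 <= 2 e curvature_bound, and E |T - E T| <= 2 (1 + E (T - A1 theta)^2)
   because |x| <= 1 + x^2. *)
definition moment_bound :: real where
  "moment_bound = 2 * (1 + 2 * exp 1 * curvature_bound)"

(* Enlarged to M1 M0 >= 1 so that the factor M1 M0 in the upper bound on lam is absorbed. *)
definition lip :: real where
  "lip = max (M1 M0) (SOME L. lipschitz_on L UNIV \<eta>)"

lemma curvature_bound_pos: "0 < curvature_bound"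
  using clip by (simp add: clip_ok_def curvature_bound_def)

lemma moment_bound_ge: "2 < moment_bound" "curvature_bound \<le> moment_bound"
proof -
  have "curvature_bound \<le> exp 1 * curvature_bound" using curvature_bound_pos by simp
  moreover have "moment_bound = 2 + 4 * (exp 1 * curvature_bound)"
    by (simp add: moment_bound_def algebra_simps)
  ultimately show "curvature_bound \<le> moment_bound" using curvature_bound_pos by linarith
  show "2 < moment_bound" using curvature_bound_pos by (simp add: moment_bound_def)
qed

lemma lip_bounds: "\<bar>\<eta> u - \<eta> v\<bar> \<le> lip * \<bar>u - v\<bar>" "1 \<le> M1 M0" "M1 M0 \<le> lip" "1 \<le> lip"
proof -
  have "\<exists>L. lipschitz_on L UNIV \<eta>" using clip by (simp add: clip_ok_def)
  then have L: "lipschitz_on (SOME L. lipschitz_on L UNIV \<eta>) UNIV \<eta>" by (rule someI_ex)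
  have "\<bar>\<eta> u - \<eta> v\<bar> \<le> (SOME L. lipschitz_on L UNIV \<eta>) * \<bar>u - v\<bar>"
    using lipschitz_onD[OF L] by (simp add: dist_real_def)
  also have "\<dots> \<le> lip * \<bar>u - v\<bar>" by (intro mult_right_mono) (auto simp: lip_def)
  finally show "\<bar>\<eta> u - \<eta> v\<bar> \<le> lip * \<bar>u - v\<bar>" .
  show "1 \<le> M1 M0" using clip by (simp add: clip_ok_def one_le_M1)
  then show "M1 M0 \<le> lip" "1 \<le> lip" by (auto simp: lip_def)
qed

lemma range_clip: "open (range \<eta>)" "is_interval (range \<eta>)" "range \<eta> \<subseteq> nat_param \<mu> h T"
proof -
  have "continuous_on UNIV \<eta>" "inj \<eta>"
    using clip lipschitz_on_continuous_on by (auto simp: clip_ok_def)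
  then show "open (range \<eta>)" "is_interval (range \<eta>)"
    by (rule continuous_inj_range_open_interval)+
  show "range \<eta> \<subseteq> nat_param \<mu> h T" using clip by (auto simp: clip_ok_def I_A_def)
qed

lemma A2_le_curvature_bound: "t \<in> range \<eta> \<Longrightarrow> A2 t \<le> curvature_bound"
  using clip by (auto simp: clip_ok_def I_A_def curvature_bound_def)

lemma derivatives_on_range:
  assumes "t \<in> range \<eta>"
  shows "(A has_real_derivative A1 t) (at t)" "(A1 has_real_derivative A2 t) (at t)"
proof -
  have t: "t \<in> nat_param \<mu> h T" using assms range_clip(3) by auto
  have "at t within range \<eta> = at t" by (rule at_within_open[OF assms range_clip(1)])
  then show "(A has_real_derivative A1 t) (at t)" "(A1 has_real_derivative A2 t) (at t)"
    using has_field_derivative_subset[OF expfam_okD(6)[OF expfam t] range_clip(3)]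
      has_field_derivative_subset[OF expfam_okD(7)[OF expfam t] range_clip(3)] by simp_all
qed

lemma bregman_clip_le:
  "A (\<eta> u) - A (\<eta> v) - (\<eta> u - \<eta> v) * A1 (\<eta> v) \<le> curvature_bound * (\<eta> u - \<eta> v)\<^sup>2 / 2"
  by (rule taylor_remainder_le[OF range_clip(2) derivatives_on_range A2_le_curvature_bound]) auto

lemma prob_space_obs_clip: "prob_space (obs_dist \<mu> h T A (\<eta> x))"
  using prob_space_obs_dist[OF expfam] range_clip(3) by auto

lemma abs_central_moment_le:
  "(\<integral>\<^sup>+ y. ennreal \<bar>T y - (\<integral>z. T z \<partial>obs_dist \<mu> h T A (\<eta> x))\<bar> \<partial>obs_dist \<mu> h T A (\<eta> x))
     \<le> ennreal moment_bound"
  unfolding moment_bound_def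
  by (rule obs_dist_abs_central_moment_le[OF expfam range_clip derivatives_on_range
        A2_le_curvature_bound curvature_bound_pos]) auto

lemma data_dist_abs_dev_sum_le:
  assumes "0 < R"
  shows "\<exists>E \<in> sets (data_dist \<mu> h T A \<eta> X n d \<beta>s).
           measure (data_dist \<mu> h T A \<eta> X n d \<beta>s) E \<ge> 1 - real n * moment_bound / R \<and>
           (\<forall>y\<in>E. (\<Sum>i<n. \<bar>T (y i) - (\<integral>z. T z \<partial>obs_dist \<mu> h T A (\<eta> (lin_pred X d \<beta>s i)))\<bar>) \<le> R)"
  unfolding data_dist_def
proof (rule PiM_sum_Markov[where f = "\<lambda>i y. \<bar>T y - (\<integral>z. T z \<partial>obs_dist \<mu> h T A (\<eta> (lin_pred X d \<beta>s i)))\<bar>"])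
  note [measurable_cong] = sets_obs_dist[OF expfam] and [measurable] = expfam_okD(3)[OF expfam]
  show "\<And>i. i < n \<Longrightarrow> (\<lambda>y. \<bar>T y - (\<integral>z. T z \<partial>obs_dist \<mu> h T A (\<eta> (lin_pred X d \<beta>s i)))\<bar>)
      \<in> borel_measurable (obs_dist \<mu> h T A (\<eta> (lin_pred X d \<beta>s i)))"
    by measurable
  show "0 \<le> moment_bound" using moment_bound_ge by simp
qed (use assms prob_space_obs_clip abs_central_moment_le in auto)

lemma Ln_ge_minus_two_on_prior_box:
  assumes y: "(\<Sum>i<n. \<bar>T (y i) - (\<integral>z. T z \<partial>obs_dist \<mu> h T A (\<eta> (lin_pred X d \<beta>s i)))\<bar>)
      \<le> moment_bound * (real n)\<^sup>2"
    and n: "0 < n" and \<beta>: "\<beta> \<in> prior_box d S \<beta>s r" and S: "S \<subseteq> {..<d}"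
    and \<beta>s: "\<And>j. j < d \<Longrightarrow> j \<notin> S \<Longrightarrow> \<beta>s j = 0" and X: "\<And>i j. i < n \<Longrightarrow> j < d \<Longrightarrow> \<bar>X i j\<bar> \<le> m"
    and r: "lip * (m * r * real (card S)) \<le> 1 / (moment_bound * (real n)\<^sup>2)"
  shows "-2 \<le> Ln \<mu> h T A A1 \<eta> X n d \<beta>s \<beta> y"
proof -
  define \<delta> where "\<delta> = 1 / (moment_bound * (real n)\<^sup>2)"
  have K: "2 < moment_bound" "curvature_bound \<le> moment_bound" by (rule moment_bound_ge)+
  have close: "\<bar>\<eta> (lin_pred X d \<beta> i) - \<eta> (lin_pred X d \<beta>s i)\<bar> \<le> \<delta>" if "i < n" for i
  proof -
    have "\<bar>\<eta> (lin_pred X d \<beta> i) - \<eta> (lin_pred X d \<beta>s i)\<bar> \<le> lip * \<bar>lin_pred X d \<beta> i - lin_pred X d \<beta>s i\<bar>"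
      by (rule lip_bounds)
    also have "\<dots> \<le> lip * (m * r * real (card S))"
      using lin_pred_diff_le_on_box[OF \<beta> S \<beta>s X] that lip_bounds(4) by (intro mult_left_mono) auto
    finally show ?thesis using r by (simp add: \<delta>_def)
  qed
  have "curvature_bound \<le> moment_bound * 1 * 1" using K by simp
  also have "\<dots> \<le> 2 * moment_bound * moment_bound * real n ^ 3"
    using K n by (intro mult_mono) auto
  finally have "real n * curvature_bound * \<delta>\<^sup>2 / 2 \<le> 1"
    using K n by (simp add: \<delta>_def field_simps power2_eq_square eval_nat_numeral)
  then show ?thesis
    using K n curvature_bound_pos
    by (intro Ln_ge_minus_two[OF y close bregman_clip_le]) (auto simp: \<delta>_def)
qed

lemma large_n_bounds:
  assumes "lip * moment_bound \<le> real n" "n < d"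
  shows "2 < real n" "1 \<le> ln (real d)"
proof -
  have "moment_bound \<le> lip * moment_bound"
    using moment_bound_ge lip_bounds(4) by (simp add: mult_le_cancel_right1)
  then show "2 < real n" using assms(1) moment_bound_ge by linarith
  then have "exp 1 \<le> real d" using exp_le assms(2) by linarith
  then show "1 \<le> ln (real d)" using assms(2) by (subst ln_ge_iff) auto
qed

lemma prior_integral_exp_Ln_ge:
  fixes X :: "nat \<Rightarrow> nat \<Rightarrow> real" and \<beta>s :: "nat \<Rightarrow> real"
  defines "s \<equiv> card {j. \<beta>s j \<noteq> 0}"
  assumes nd: "n < d" and n: "lip * moment_bound \<le> real n"
    and lam: "0 < lam" "M_AX M0 X n d / real d \<le> lam" "lam \<le> M_AX M0 X n d * sqrt (ln (real d))"
    and supp: "\<forall>j\<ge>d. \<beta>s j = 0" and s: "0 < s" "real s * ln (real d) \<le> real n"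
    and y: "(\<Sum>i<n. \<bar>T (y i) - (\<integral>z. T z \<partial>obs_dist \<mu> h T A (\<eta> (lin_pred X d \<beta>s i)))\<bar>)
      \<le> moment_bound * (real n)\<^sup>2"
  shows "ennreal (exp (-3) * C_norm d a * real d powr (- (a + 6) * real s) * exp (- lam * (\<Sum>j<d. \<bar>\<beta>s j\<bar>)))
      \<le> prior_integral d a lam (\<lambda>\<beta>. ennreal (exp (Ln \<mu> h T A A1 \<eta> X n d \<beta>s \<beta> y)))"
proof -
  define S where "S = {j. \<beta>s j \<noteq> 0}"
  define m where "m = Xnorm X n d"
  define r where "r = 1 / (moment_bound * (real n)\<^sup>2 * lip * m * real s)"
  (* so that on the box the clipped natural parameters move by at most 1 / (moment_bound n^2) *)
  note K = moment_bound_ge(1) and n2 = large_n_bounds(1)[OF n nd] and ln = large_n_bounds(2)[OF n nd]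
  have S: "S \<subseteq> {..<d}" using supp by (auto simp: S_def not_less[symmetric])
  have X: "\<bar>X i j\<bar> \<le> m" if "i < n" "j < d" for i j using that by (simp add: m_def abs_le_Xnorm)
  have "0 \<le> m" using X[of 0 0] n2 nd by simp
  then have m: "0 < m" using lam(1,3) by (cases "m = 0") (auto simp: M_AX_def m_def)
  have r: "0 < r" using m K lip_bounds(4) n2 s(1) by (simp add: r_def)
  have radius: "real d powr (-5) \<le> lam * r" "lam * r * real s \<le> 1"
    using prior_radius_bounds[OF m lip_bounds(2,3) _ n nd s ln] K lam(2,3)
    by (simp_all add: r_def M_AX_def m_def mult.commute)
  have Ln: "ennreal (exp (-2)) \<le> ennreal (exp (Ln \<mu> h T A A1 \<eta> X n d \<beta>s \<beta> y))"
    if "\<beta> \<in> prior_box d S \<beta>s r" for \<beta>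
  proof -
    have "lip * (m * r * real (card S)) \<le> 1 / (moment_bound * (real n)\<^sup>2)"
      using m K lip_bounds(4) n2 s(1) by (simp add: r_def S_def s_def)
    then show ?thesis
      using Ln_ge_minus_two_on_prior_box[OF y _ that S _ X] n2 by (simp add: S_def)
  qed
  have "(\<Sum>j<d. \<bar>\<beta>s j\<bar>) = (\<Sum>j\<in>S. \<bar>\<beta>s j\<bar>)"
    using S by (intro sum.mono_neutral_right) (auto simp: S_def)
  then have "exp (-3) * C_norm d a * real d powr (- (a + 6) * real s) * exp (- lam * (\<Sum>j<d. \<bar>\<beta>s j\<bar>))
      \<le> model_weight d a S * exp (-2) * (\<Prod>j\<in>S. lam * r * exp (- lam * (\<bar>\<beta>s j\<bar> + r)))"
    using prior_box_mass_ge[OF S _ lam(1) r, where c = \<beta>s and a = a] radius nd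
    by (simp add: S_def s_def exp_add[of "-1" "-2", simplified] mult_ac)
  also have "ennreal \<dots> \<le> prior_integral d a lam (\<lambda>\<beta>. ennreal (exp (Ln \<mu> h T A A1 \<eta> X n d \<beta>s \<beta> y)))"
    by (rule prior_integral_ge_box[OF S lam(1) r _ Ln]) simp
  finally show ?thesis by (simp add: ennreal_leI)
qed

lemma marginal_likelihood_ge_at:
  fixes X :: "nat \<Rightarrow> nat \<Rightarrow> real" and \<beta>s :: "nat \<Rightarrow> real"
  defines "s \<equiv> card {j. \<beta>s j \<noteq> 0}"
  assumes nd: "n < d" and n: "lip * moment_bound \<le> real n"
    and lam: "0 < lam" "M_AX M0 X n d / real d \<le> lam" "lam \<le> M_AX M0 X n d * sqrt (ln (real d))"
    and supp: "\<forall>j\<ge>d. \<beta>s j = 0" and s: "0 < s" "real s * ln (real d) \<le> real n"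
  shows "\<exists>E \<in> sets (data_dist \<mu> h T A \<eta> X n d \<beta>s).
           measure (data_dist \<mu> h T A \<eta> X n d \<beta>s) E \<ge> 1 - 1 / (real s * ln (real d)) \<and>
           (\<forall>y\<in>E. prior_integral d a lam (\<lambda>\<beta>. ennreal (exp (Ln \<mu> h T A A1 \<eta> X n d \<beta>s \<beta> y)))
              \<ge> ennreal (exp (-3) * C_norm d a * real d powr (- (a + 6) * real s)
                  * exp (- lam * (\<Sum>j<d. \<bar>\<beta>s j\<bar>))))"
proof -
  note K = moment_bound_ge(1) and n2 = large_n_bounds(1)[OF n nd] and ln = large_n_bounds(2)[OF n nd]
  obtain E where E: "E \<in> sets (data_dist \<mu> h T A \<eta> X n d \<beta>s)"
    "measure (data_dist \<mu> h T A \<eta> X n d \<beta>s) E \<ge> 1 - real n * moment_bound / (moment_bound * (real n)\<^sup>2)"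
    and y: "\<And>y. y \<in> E \<Longrightarrow> (\<Sum>i<n. \<bar>T (y i) - (\<integral>z. T z \<partial>obs_dist \<mu> h T A (\<eta> (lin_pred X d \<beta>s i)))\<bar>)
      \<le> moment_bound * (real n)\<^sup>2"
    using data_dist_abs_dev_sum_le[of "moment_bound * (real n)\<^sup>2" X n d \<beta>s] K n2 by auto
  have "1 / real n \<le> 1 / (real s * ln (real d))"
    using s ln n2 by (intro divide_left_mono) auto
  then have "measure (data_dist \<mu> h T A \<eta> X n d \<beta>s) E \<ge> 1 - 1 / (real s * ln (real d))"
    using E(2) K n2 by (simp add: power2_eq_square)
  then show ?thesis
    using E(1) prior_integral_exp_Ln_ge[OF nd n lam supp s[unfolded s_def] y] unfolding s_def by blast
qed

lemma eventually_marginal_likelihood_ge: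
  fixes X :: "nat \<Rightarrow> nat \<Rightarrow> nat \<Rightarrow> real" and d :: "nat \<Rightarrow> nat" and a lam b :: "nat \<Rightarrow> real"
    and \<beta>s :: "nat \<Rightarrow> nat \<Rightarrow> real"
  assumes d: "\<forall>n. n < d n"
    and lam: "\<forall>n. 0 < lam n \<and> M_AX M0 (X n) n (d n) / real (d n) \<le> lam n \<and>
                 lam n \<le> M_AX M0 (X n) n (d n) * sqrt (ln (real (d n)))"
    and b: "b \<in> o(\<lambda>n. real n / ln (real (d n)))"
    and supp: "\<forall>n. \<forall>j\<ge>d n. \<beta>s n j = 0"
    and card: "\<forall>n. 0 < card {j. \<beta>s n j \<noteq> 0} \<and> real (card {j. \<beta>s n j \<noteq> 0}) \<le> b n"
  shows "\<forall>\<^sub>F n in sequentially.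
           \<exists>E \<in> sets (data_dist \<mu> h T A \<eta> (X n) n (d n) (\<beta>s n)).
             measure (data_dist \<mu> h T A \<eta> (X n) n (d n) (\<beta>s n)) E
               \<ge> 1 - 1 / (real (card {j. \<beta>s n j \<noteq> 0}) * ln (real (d n))) \<and>
             (\<forall>y\<in>E. prior_integral (d n) (a n) (lam n)
                        (\<lambda>\<beta>. ennreal (exp (Ln \<mu> h T A A1 \<eta> (X n) n (d n) (\<beta>s n) \<beta> y)))
                      \<ge> ennreal (exp (-3) * C_norm (d n) (a n)
                          * real (d n) powr (- (a n + 6) * real (card {j. \<beta>s n j \<noteq> 0}))
                          * exp (- lam n * (\<Sum>j<d n. \<bar>\<beta>s n j\<bar>))))"
proof -
  have "\<forall>\<^sub>F n in sequentially. norm (b n) \<le> 1 * norm (real n / ln (real (d n)))"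
    using landau_o.smallD[OF b, of 1] by simp
  moreover have "\<forall>\<^sub>F n in sequentially. lip * moment_bound \<le> real n"
    using filterlim_real_sequentially by (simp add: filterlim_at_top)
  ultimately show ?thesis
  proof eventually_elim
    case (elim n)
    have ln: "1 \<le> ln (real (d n))" using large_n_bounds(2)[OF elim(2) d[rule_format]] .
    have "real (card {j. \<beta>s n j \<noteq> 0}) * ln (real (d n)) \<le> b n * ln (real (d n))"
      using card[rule_format, of n] ln by (intro mult_right_mono) auto
    also have "\<dots> \<le> \<bar>b n\<bar> * ln (real (d n))" using ln by (intro mult_right_mono) auto
    also have "\<dots> \<le> real n" using elim(1) ln by (simp add: le_divide_eq)
    finally have "real (card {j. \<beta>s n j \<noteq> 0}) * ln (real (d n)) \<le> real n" .
    then show ?case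
      by (intro marginal_likelihood_ge_at[OF d[rule_format] elim(2)]) (use lam supp card in auto)
  qed
qed

end

theorem theorem1:
  shows "\<exists>c>0. \<forall>(\<mu>::real measure) h T A A1 A2 M0 \<eta>
            (X :: nat \<Rightarrow> nat \<Rightarrow> nat \<Rightarrow> real) (d :: nat \<Rightarrow> nat) (a :: nat \<Rightarrow> real)
            (lam :: nat \<Rightarrow> real) (b :: nat \<Rightarrow> real) (\<beta>s :: nat \<Rightarrow> nat \<Rightarrow> real).
     expfam_ok \<mu> h T A A1 A2 \<and> clip_ok \<mu> h T A2 M0 \<eta> \<and>
     (\<forall>n. n < d n) \<and>
     (\<forall>n. 0 < a n) \<and>
     (\<forall>n. 0 < lam n \<and> M_AX M0 (X n) n (d n) / real (d n) \<le> lam n \<and>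
          lam n \<le> M_AX M0 (X n) n (d n) * sqrt (ln (real (d n)))) \<and>
     (\<forall>n. 0 < b n) \<and> b \<in> o(\<lambda>n. real n / ln (real (d n))) \<and>
     (\<forall>n. \<forall>j\<ge>d n. \<beta>s n j = 0) \<and>
     (\<forall>n. 0 < card {j. \<beta>s n j \<noteq> 0} \<and> real (card {j. \<beta>s n j \<noteq> 0}) \<le> b n)
     \<longrightarrow>
     (\<forall>\<^sub>F n in sequentially.
        \<exists>E \<in> sets (data_dist \<mu> h T A \<eta> (X n) n (d n) (\<beta>s n)).
          measure (data_dist \<mu> h T A \<eta> (X n) n (d n) (\<beta>s n)) E
            \<ge> 1 - 1 / (real (card {j. \<beta>s n j \<noteq> 0}) * ln (real (d n))) \<and>
          (\<forall>y\<in>E.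
             prior_integral (d n) (a n) (lam n)
               (\<lambda>\<beta>. ennreal (exp (Ln \<mu> h T A A1 \<eta> (X n) n (d n) (\<beta>s n) \<beta> y)))
             \<ge> ennreal (c * C_norm (d n) (a n)
                   * real (d n) powr (- (a n + 6) * real (card {j. \<beta>s n j \<noteq> 0}))
                   * exp (- lam n * (\<Sum>j<d n. \<bar>\<beta>s n j\<bar>)))))"
proof (intro exI[of _ "exp (-3)"] conjI allI impI, goal_cases)
  case 1
  show ?case by simp
next
  case (2 \<mu> h T A A1 A2 M0 \<eta> X d a lam b \<beta>s)
  then interpret clipped_glm \<mu> h T A A1 A2 M0 \<eta> by unfold_locales auto
  show ?case using 2 by (intro eventually_marginal_likelihood_ge) auto
qed

end
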